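(* Let $i,j\in\mathbb{N}$ and $n\in\mathbb{N}_0$. If $d_j(n+1)=d_i(n)\pm1$, then $d_j(n+1)+d_i(n)=d_\ell(2n+1)$ for some $\ell\in\{3,i+1,j+1\}$.
   Context: For $i\in\mathbb{N}$ and $n\in\mathbb{N}_0$, $d_i(n)=2^{i-1}-\left|(n\bmod 2^i)-2^{i-1}\right|$. *)

theory Defs
  imports Main
begin

definition d :: "nat \<Rightarrow> nat \<Rightarrow> int" where
  "d i n = 2 ^ (i - 1) - \<bar>int (n mod 2 ^ i) - 2 ^ (i - 1)\<bar>"

end

theory Submission
  imports Defs
begin

text \<open>
  \<open>d i n\<close> is the distance from \<open>n\<close> to the nearest multiple of \<open>2^i\<close>. Doubling gives
  \<open>d (i+1) (2n+1) = 2 d i n \<plusminus> 1\<close>, with \<open>+\<close> iff \<open>n\<close> lies in the lower half of its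
  residue block, and \<open>d (j+1) (2(n+1)-1) = 2 d j (n+1) \<mp> 1\<close>, with \<open>-\<close> iff \<open>n+1\<close> lies in the
  nonzero lower half. So \<open>\<ell> = i+1\<close> or \<open>\<ell> = j+1\<close> works unless both \<open>n\<close> and \<open>n+1\<close>
  round up (when \<open>d j (n+1) = d i n + 1\<close>) or both round down (when \<open>d j (n+1) = d i n - 1\<close>).
  Then the nearest multiples of \<open>2^i\<close> and \<open>2^j\<close> differ by exactly 2, forcing
  \<open>min i j = 1\<close>; this pins \<open>2n+1\<close> down to 3 or 5 modulo 8, where \<open>d 3\<close> takes the value 3.
\<close>

lemma d_nonneg: "0 \<le> d i n"
proof -
  have "int (n mod 2 ^ i) < 2 ^ i"
    by simp
  moreover have "(2::int) ^ i \<le> 2 * 2 ^ (i - 1)"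
    by (cases i) auto
  ultimately show ?thesis
    unfolding d_def by linarith
qed

lemma d_eq_mod_if_le_half: "n mod 2 ^ i \<le> 2 ^ (i - 1) \<Longrightarrow> d i n = int (n mod 2 ^ i)"
  unfolding d_def by simp

lemma d_eq_sub_mod_if_ge_half: "2 ^ (i - 1) \<le> n mod 2 ^ i \<Longrightarrow> d i n = 2 ^ i - int (n mod 2 ^ i)"
proof -
  assume upper: "2 ^ (i - 1) \<le> n mod 2 ^ i"
  then have "0 < i"
    by (cases i) auto
  moreover have "2 ^ (i - 1) \<le> int (n mod 2 ^ i)"
    using upper by simp
  ultimately show ?thesis
    unfolding d_def by (cases i) auto
qed

lemma d_less_half_if_gt_half: "2 ^ (i - 1) < n mod 2 ^ i \<Longrightarrow> d i n < 2 ^ (i - 1)"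
  unfolding d_def by simp

lemma int_eq_power_two_div_mod: "int n = 2 ^ i * int (n div 2 ^ i) + int (n mod 2 ^ i)"
  by (simp add: zdiv_int zmod_int)

lemma power_two_dvd_sub_d: "n mod 2 ^ i \<le> 2 ^ (i - 1) \<Longrightarrow> (2::int) ^ i dvd int n - d i n"
  using int_eq_power_two_div_mod[of n i] by (simp add: d_eq_mod_if_le_half)

lemma power_two_dvd_add_d: "2 ^ (i - 1) \<le> n mod 2 ^ i \<Longrightarrow> (2::int) ^ i dvd int n + d i n"
proof -
  assume "2 ^ (i - 1) \<le> n mod 2 ^ i"
  then have "int n + d i n = 2 ^ i * (int (n div 2 ^ i) + 1)"
    using int_eq_power_two_div_mod[of n i] by (simp add: d_eq_sub_mod_if_ge_half algebra_simps)
  then show ?thesis by simp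
qed

lemma d_Suc_double_plus_one:
  "d (Suc i) (2 * n + 1) =
     (if n mod 2 ^ i < 2 ^ (i - 1) then 2 * d i n + 1 else 2 * d i n - 1)"
proof -
  have "(2 * n + 1) mod 2 ^ Suc i = 2 * (n mod 2 ^ i) + 1"
    using mod_mult2_eq[of "2 * n + 1" 2 "2 ^ i"] by (simp add: mult.commute[of _ 2])
  then have "d (Suc i) (2 * n + 1) = 2 ^ i - \<bar>2 * int (n mod 2 ^ i) + 1 - 2 ^ i\<bar>"
    unfolding d_def by simp
  moreover have "int (n mod 2 ^ i) < 2 ^ i"
    by simp
  moreover have "n mod 2 ^ i < 2 ^ (i - 1) \<longleftrightarrow> 2 * int (n mod 2 ^ i) < 2 ^ i"
    by (cases i) (auto simp flip: of_nat_less_iff)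
  ultimately show ?thesis
    using d_eq_mod_if_le_half[of n i] d_eq_sub_mod_if_ge_half[of i n] by auto
qed

lemma d_Suc_double_minus_one:
  assumes "0 < m"
  shows "d (Suc j) (2 * m - 1) =
    (if 0 < m mod 2 ^ j \<and> m mod 2 ^ j \<le> 2 ^ (j - 1) then 2 * d j m - 1 else 2 * d j m + 1)"
proof (cases "m mod 2 ^ j = 0")
  case True
  then obtain q where "m = 2 ^ j * q" "0 < q"
    using assms by (metis mod_0_imp_dvd dvd_def mult_0_right neq0_conv)
  then have "2 * m - 1 = (2 ^ Suc j - 1) + 2 ^ Suc j * (q - 1)"
    by (cases q) (auto simp: algebra_simps)
  moreover have "2 ^ Suc j - 1 < (2::nat) ^ Suc j"
    by simp
  ultimately have "(2 * m - 1) mod 2 ^ Suc j = 2 ^ Suc j - 1"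
    by (metis mod_less mod_mult_self2)
  then show ?thesis
    using True by (simp add: d_def d_eq_mod_if_le_half of_nat_diff)
next
  case False
  have "2 * m = 2 * (m mod 2 ^ j + 2 ^ j * (m div 2 ^ j))"
    by simp
  also have "\<dots> = 2 * (m mod 2 ^ j) + 2 ^ Suc j * (m div 2 ^ j)"
    by (simp only: power_Suc distrib_left mult.assoc)
  finally have "2 * m = 2 * (m mod 2 ^ j) + 2 ^ Suc j * (m div 2 ^ j)" .
  then have "2 * m - 1 = (2 * (m mod 2 ^ j) - 1) + 2 ^ Suc j * (m div 2 ^ j)"
    using False by linarith
  moreover have "2 * (m mod 2 ^ j) - 1 < 2 ^ Suc j"
    by (simp add: less_imp_diff_less)
  ultimately have "(2 * m - 1) mod 2 ^ Suc j = 2 * (m mod 2 ^ j) - 1"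
    by (metis mod_less mod_mult_self2)
  then have "d (Suc j) (2 * m - 1) = 2 ^ j - \<bar>2 * int (m mod 2 ^ j) - 1 - 2 ^ j\<bar>"
    using False by (simp add: d_def of_nat_diff)
  moreover have "int (m mod 2 ^ j) < 2 ^ j"
    by simp
  moreover have "m mod 2 ^ j \<le> 2 ^ (j - 1) \<longleftrightarrow> 2 * int (m mod 2 ^ j) \<le> 2 ^ j"
    using False by (cases j) (auto simp flip: of_nat_le_iff)
  ultimately show ?thesis
    using False d_eq_mod_if_le_half[of m j] d_eq_sub_mod_if_ge_half[of j m] by auto
qed

lemma power_two_dvd_and_dvd_add_two:
  fixes x :: int
  assumes "2 ^ i dvd x" and "2 ^ j dvd x + 2"
  shows "i \<le> 1 \<or> j \<le> 1"
proof -
  have "2 ^ min i j dvd x" and "2 ^ min i j dvd x + 2"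
    using assms by (meson dvd_trans le_imp_power_dvd min.cobounded1 min.cobounded2)+
  then have "(2::int) ^ min i j dvd 2 ^ 1"
    by (simp add: dvd_add_right_iff)
  then show ?thesis
    using dvd_power_iff[of "2::int" "min i j" 1] by auto
qed

lemma eight_dvd_if_power_two_dvd:
  fixes x :: int
  assumes "2 < (2::int) ^ (k - 1)" and "2 ^ k dvd x"
  shows "8 dvd x"
proof -
  have "3 \<le> k"
    using assms(1) power_strict_increasing_iff[of "2::int" 1 "k - 1"] by simp
  then show ?thesis
    using assms(2) le_imp_power_dvd[of 3 k "2::int"] dvd_trans by auto
qed

lemma d_three_eq_three: "m mod 8 = 3 \<or> m mod 8 = 5 \<Longrightarrow> d 3 m = 3"
  by (auto simp: d_def)

lemma d_sum_eq_d_three_round_up: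
  assumes upper: "\<not> n mod 2 ^ i < 2 ^ (i - 1)"
    and upper': "\<not> (0 < (n + 1) mod 2 ^ j \<and> (n + 1) mod 2 ^ j \<le> 2 ^ (j - 1))"
    and step: "d j (n + 1) = d i n + 1"
  shows "d j (n + 1) + d i n = d 3 (2 * n + 1)"
proof -
  have "(n + 1) mod 2 ^ j \<noteq> 0"
  proof
    assume "(n + 1) mod 2 ^ j = 0"
    then have "d j (n + 1) = 0"
      by (simp add: d_eq_mod_if_le_half)
    with step d_nonneg[of i n] show False
      by simp
  qed
  then have upper'_strict: "2 ^ (j - 1) < (n + 1) mod 2 ^ j"
    using upper' by auto
  have dvd_i: "2 ^ i dvd int n + d i n"
    using upper by (simp add: power_two_dvd_add_d)
  have "2 ^ j dvd int (n + 1) + d j (n + 1)"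
    using upper'_strict power_two_dvd_add_d less_imp_le by blast
  moreover have "int (n + 1) + d j (n + 1) = int n + d i n + 2"
    using step by simp
  ultimately have dvd_j: "2 ^ j dvd int n + d i n + 2"
    by metis
  have "d j (n + 1) < 2 ^ (j - 1)"
    using upper'_strict by (rule d_less_half_if_gt_half)
  then have "(1::int) < 2 ^ (j - 1)"
    using step d_nonneg[of i n] by linarith
  then have "\<not> j \<le> 1"
    by (cases "j - 1") auto
  with power_two_dvd_and_dvd_add_two[OF dvd_i dvd_j] have "i = 1"
    using upper by (auto simp: le_Suc_eq)
  then have d_i_one: "d i n = 1" and d_j_two: "d j (n + 1) = 2"
    using upper step d_eq_sub_mod_if_ge_half[of i n] by auto
  with \<open>d j (n + 1) < 2 ^ (j - 1)\<close> have "8 dvd int n + d i n + 2"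
    using dvd_j by (simp add: eight_dvd_if_power_two_dvd)
  then have "8 dvd int n + 3"
    using d_i_one by (simp add: add.assoc)
  then have "(2 * n + 1) mod 8 = 3"
    by presburger
  then show ?thesis
    using d_i_one d_j_two by (simp add: d_three_eq_three)
qed

lemma d_sum_eq_d_three_round_down:
  assumes lower: "n mod 2 ^ i < 2 ^ (i - 1)"
    and lower': "0 < (n + 1) mod 2 ^ j \<and> (n + 1) mod 2 ^ j \<le> 2 ^ (j - 1)"
    and step: "d j (n + 1) = d i n - 1"
  shows "d j (n + 1) + d i n = d 3 (2 * n + 1)"
proof -
  have d_i_eq: "d i n = int (n mod 2 ^ i)" and d_j_eq: "d j (n + 1) = int ((n + 1) mod 2 ^ j)"
    using lower lower' d_eq_mod_if_le_half less_imp_le by blast+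
  have dvd_i: "2 ^ i dvd int n - d i n"
    using lower by (simp add: power_two_dvd_sub_d)
  have "2 ^ j dvd int (n + 1) - d j (n + 1)"
    using lower' power_two_dvd_sub_d by blast
  moreover have "int (n + 1) - d j (n + 1) = int n - d i n + 2"
    using step by simp
  ultimately have dvd_j: "2 ^ j dvd int n - d i n + 2"
    by metis
  have "d i n < 2 ^ (i - 1)"
    using d_i_eq lower by simp
  then have "(1::int) < 2 ^ (i - 1)"
    using step d_nonneg[of j "n + 1"] by linarith
  then have "\<not> i \<le> 1"
    by (cases "i - 1") auto
  with power_two_dvd_and_dvd_add_two[OF dvd_i dvd_j] have "j \<le> 1"
    by simp
  then have d_j_one: "d j (n + 1) = 1" and d_i_two: "d i n = 2"
    using lower' d_j_eq step by (auto simp: le_Suc_eq)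
  with \<open>d i n < 2 ^ (i - 1)\<close> have "(2::int) < 2 ^ (i - 1)"
    by simp
  then have "8 dvd int n - d i n"
    using dvd_i by (rule eight_dvd_if_power_two_dvd)
  then have "8 dvd int n - 2"
    using d_i_two by simp
  then have "(2 * n + 1) mod 8 = 5"
    by presburger
  then show ?thesis
    using d_i_two d_j_one by (simp add: d_three_eq_three)
qed

theorem lemma12:
  fixes i j n :: nat
  assumes "i \<ge> 1" and "j \<ge> 1"
    and "d j (n + 1) = d i n + 1 \<or> d j (n + 1) = d i n - 1"
  shows "\<exists>l \<in> {3, i + 1, j + 1}. d j (n + 1) + d i n = d l (2 * n + 1)"
proof -
  have d_i: "d (i + 1) (2 * n + 1) =
      (if n mod 2 ^ i < 2 ^ (i - 1) then 2 * d i n + 1 else 2 * d i n - 1)"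
    using d_Suc_double_plus_one by simp
  have d_j: "d (j + 1) (2 * n + 1) =
      (if 0 < (n + 1) mod 2 ^ j \<and> (n + 1) mod 2 ^ j \<le> 2 ^ (j - 1)
       then 2 * d j (n + 1) - 1 else 2 * d j (n + 1) + 1)"
    using d_Suc_double_minus_one[of "n + 1" j] by simp
  from assms(3) show ?thesis
  proof
    assume step: "d j (n + 1) = d i n + 1"
    then show ?thesis
      using d_i d_j d_sum_eq_d_three_round_up[OF _ _ step] by auto
  next
    assume step: "d j (n + 1) = d i n - 1"
    then show ?thesis
      using d_i d_j d_sum_eq_d_three_round_down[OF _ _ step] by auto
  qed
qed

end
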